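(* Let $G$ be a graph, $X\subseteq V(G)$ with $F:=G-X$ a pseudoforest, and $k$ an integer. Assume that: (1) there is no $v\in X$ with $\mathrm{Conf}_F(\{v\})\ge |X|$; (2) there are no distinct non-adjacent $u,v\in X$ with $\mathrm{Conf}_F(\{u,v\})\ge|X|$; (3) for all distinct $u,v,w\in X$ such that $\{u,v,w\}$ is independent in $G$ and $\mathrm{Conf}_F(\{u,v,w\})\ge|X|$, there is an anchor triangle $P$ with $N_G(V(P))=\{u,v,w\}$; (4) there is no connected component $P$ of $F$ which is not a non-redundant anchor triangle and satisfies $\mathrm{Conf}_P(X')=0$ for every chunk $X'$. Then the number of connected components of $F$ is at most $|X|^4+|X|^3$.
   Context: All graphs are finite, simple and undirected; a pseudoforest is a graph each of whose connected components contains at most one cycle. $\alpha(H)$ is the independence number of $H$. For a subgraph $F'\subseteq F$ and $X'\subseteq X$, $\mathrm{Conf}_{F'}(X') := \alpha(F') - \alpha(F' - N_G(X'))$, where $N_G(S)$ is the set of vertices outside $S$ adjacent to some vertex of $S$. A chunk is a set $X'\subseteq X$ that is independent in $G$, satisfies $1\le |X'|\le 3$, and has $\mathrm{Conf}_F(X') < |X|$. An anchor triangle is a connected component $P$ of $F$ with $V(P)=\{p_1,p_2,p_3\}$ such that there are vertices $x_1,x_2,x_3\in X$ with $N_G(p_1)=\{p_2,p_3,x_1\}$, $N_G(p_2)=\{p_1,p_3,x_2\}$, $N_G(p_3)=\{p_1,p_2,x_3\}$; it is non-redundant if no other anchor triangle has the same open neighborhood in $G$. *)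

theory Defs
  imports Main
begin

text \<open>All subgraphs
occurring in the statement (F = G - X, components of F, P - N(X')) are induced
subgraphs of G, so they are represented by their vertex sets.\<close>

definition simple_graph :: "'a set \<Rightarrow> ('a \<Rightarrow> 'a \<Rightarrow> bool) \<Rightarrow> bool" where
  "simple_graph V E \<longleftrightarrow> finite V \<and> (\<forall>u v. E u v \<longrightarrow> E v u) \<and> (\<forall>v. \<not> E v v)
     \<and> (\<forall>u v. E u v \<longrightarrow> u \<in> V \<and> v \<in> V)"

definition nbh :: "'a set \<Rightarrow> ('a \<Rightarrow> 'a \<Rightarrow> bool) \<Rightarrow> 'a set \<Rightarrow> 'a set" where
  "nbh V E S = {v \<in> V - S. \<exists>u\<in>S. E u v}"

definition indep :: "'a set \<Rightarrow> ('a \<Rightarrow> 'a \<Rightarrow> bool) \<Rightarrow> 'a set \<Rightarrow> bool" where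
  "indep V E I \<longleftrightarrow> I \<subseteq> V \<and> (\<forall>u\<in>I. \<forall>v\<in>I. \<not> E u v)"

definition alpha :: "'a set \<Rightarrow> ('a \<Rightarrow> 'a \<Rightarrow> bool) \<Rightarrow> 'a set \<Rightarrow> nat" where
  "alpha V E S = Max {card I | I. I \<subseteq> S \<and> indep V E I}"

definition Conf :: "'a set \<Rightarrow> ('a \<Rightarrow> 'a \<Rightarrow> bool) \<Rightarrow> 'a set \<Rightarrow> 'a set \<Rightarrow> int" where
  "Conf V E F' X' = int (alpha V E F') - int (alpha V E (F' - nbh V E X'))"

definition reach_in :: "('a \<Rightarrow> 'a \<Rightarrow> bool) \<Rightarrow> 'a set \<Rightarrow> 'a \<Rightarrow> 'a \<Rightarrow> bool" where
  "reach_in E S = (\<lambda>u v. u \<in> S \<and> v \<in> S \<and> E u v)\<^sup>*\<^sup>*"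

definition components :: "('a \<Rightarrow> 'a \<Rightarrow> bool) \<Rightarrow> 'a set \<Rightarrow> 'a set set" where
  "components E S = {{v \<in> S. reach_in E S u v} | u. u \<in> S}"

definition is_cycle :: "('a \<Rightarrow> 'a \<Rightarrow> bool) \<Rightarrow> 'a set \<Rightarrow> 'a list \<Rightarrow> bool" where
  "is_cycle E S cs \<longleftrightarrow> distinct cs \<and> length cs \<ge> 3 \<and> set cs \<subseteq> S \<and>
     (\<forall>i < length cs. E (cs ! i) (cs ! ((i + 1) mod length cs)))"

definition cycle_edges :: "'a list \<Rightarrow> 'a set set" where
  "cycle_edges cs = {{cs ! i, cs ! ((i + 1) mod length cs)} | i. i < length cs}"

text \<open>G[S] is a pseudoforest: each connected component contains at most one cycle
(two cycles are the same iff they have the same edge set).\<close>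
definition pseudoforest :: "('a \<Rightarrow> 'a \<Rightarrow> bool) \<Rightarrow> 'a set \<Rightarrow> bool" where
  "pseudoforest E S \<longleftrightarrow> (\<forall>C \<in> components E S. \<forall>c1 c2.
      is_cycle E C c1 \<and> is_cycle E C c2 \<longrightarrow> cycle_edges c1 = cycle_edges c2)"

definition anchor_triangle :: "'a set \<Rightarrow> ('a \<Rightarrow> 'a \<Rightarrow> bool) \<Rightarrow> 'a set \<Rightarrow> 'a set \<Rightarrow> bool" where
  "anchor_triangle V E X P \<longleftrightarrow> P \<in> components E (V - X) \<and>
     (\<exists>p1 p2 p3 x1 x2 x3. P = {p1, p2, p3} \<and> card P = 3 \<and>
        x1 \<in> X \<and> x2 \<in> X \<and> x3 \<in> X \<and>
        nbh V E {p1} = {p2, p3, x1} \<and> nbh V E {p2} = {p1, p3, x2} \<and>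
        nbh V E {p3} = {p1, p2, x3})"

definition nonredundant_anchor_triangle :: "'a set \<Rightarrow> ('a \<Rightarrow> 'a \<Rightarrow> bool) \<Rightarrow> 'a set \<Rightarrow> 'a set \<Rightarrow> bool" where
  "nonredundant_anchor_triangle V E X P \<longleftrightarrow> anchor_triangle V E X P \<and>
     \<not> (\<exists>P'. P' \<noteq> P \<and> anchor_triangle V E X P' \<and> nbh V E P' = nbh V E P)"

definition chunk :: "'a set \<Rightarrow> ('a \<Rightarrow> 'a \<Rightarrow> bool) \<Rightarrow> 'a set \<Rightarrow> 'a set \<Rightarrow> bool" where
  "chunk V E X X' \<longleftrightarrow> X' \<subseteq> X \<and> indep V E X' \<and> 1 \<le> card X' \<and> card X' \<le> 3 \<and>
     Conf V E (V - X) X' < int (card X)"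

end

theory Submission
  imports Defs
begin

text \<open>Only hypothesis (4) is needed: every component of F that is not a non-redundant anchor
triangle has positive Conf for some chunk Y.  Conf is superadditive over the components of F
(maximum independent sets of the components combine, and an independent set of F - N(Y) splits
along them), so a fixed chunk Y has positive Conf on at most Conf_F(Y) \<le> |X| - 1 components.
Chunks, and the neighbourhoods of anchor triangles, on which non-redundancy makes N injective,
are nonempty sets of at most three vertices of X, of which there are at most |X|^3.  Hence F has
at most |X|^3 + |X|^3 (|X| - 1) = |X|^4 components.\<close>

lemma symp_reach_in: "symp E \<Longrightarrow> symp (reach_in E S)"
  unfolding reach_in_def by (rule symp_rtranclp) (auto intro: sympI dest: sympD)

lemma mem_components_eq:
  assumes "symp E" and "P \<in> components E S" and "u \<in> P"
  shows "P = {v \<in> S. reach_in E S u v}"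
proof -
  obtain w where w: "P = {v \<in> S. reach_in E S w v}"
    using assms(2) unfolding components_def by blast
  have "reach_in E S u w"
    using assms(3) w sympD[OF symp_reach_in[OF assms(1)]] by blast
  moreover have "reach_in E S w u"
    using assms(3) w by blast
  ultimately have "reach_in E S w v \<longleftrightarrow> reach_in E S u v" for v
    unfolding reach_in_def by (meson rtranclp_trans)
  with w show ?thesis by blast
qed

lemma components_eqI:
  assumes "symp E" "P \<in> components E S" "Q \<in> components E S" "u \<in> P" "u \<in> Q"
  shows "P = Q"
  using mem_components_eq[OF assms(1,2,4)] mem_components_eq[OF assms(1,3,5)] by simp

lemma components_subset: "P \<in> components E S \<Longrightarrow> P \<subseteq> S"
  unfolding components_def by blast

lemma components_eq_if_edge:
  assumes "symp E" "P \<in> components E S" "Q \<in> components E S" "u \<in> P" "v \<in> Q" "E u v"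
  shows "P = Q"
proof -
  have "u \<in> S" "v \<in> S"
    using assms(2-5) components_subset by blast+
  then have "reach_in E S u v"
    using assms(6) unfolding reach_in_def by blast
  then have "v \<in> P"
    using mem_components_eq[OF assms(1,2,4)] \<open>v \<in> S\<close> by blast
  then show ?thesis
    using components_eqI[OF assms(1-3) _ assms(5)] by blast
qed

lemma finite_mem_components: "finite S \<Longrightarrow> P \<in> components E S \<Longrightarrow> finite P"
  by (rule finite_subset[OF components_subset])

lemma Union_components: "\<Union> (components E S) = S"
  unfolding components_def reach_in_def by blast

lemma finite_components: "finite S \<Longrightarrow> finite (components E S)"
  using components_subset by (metis Pow_iff finite_Pow_iff finite_subset subsetI)

lemma finite_indep_cards: "finite S \<Longrightarrow> finite {card I | I. I \<subseteq> S \<and> indep V E I}"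
  by (rule finite_subset[of _ "{..card S}"]) (auto intro: card_mono)

lemma card_le_alpha: "finite S \<Longrightarrow> I \<subseteq> S \<Longrightarrow> indep V E I \<Longrightarrow> card I \<le> alpha V E S"
  unfolding alpha_def by (rule Max_ge[OF finite_indep_cards]) auto

lemma alpha_witness:
  assumes "finite S"
  obtains I where "I \<subseteq> S" "indep V E I" "card I = alpha V E S"
proof -
  have "card {} \<in> {card I | I. I \<subseteq> S \<and> indep V E I}"
    by (intro CollectI exI[of _ "{}"]) (simp add: indep_def)
  then have "alpha V E S \<in> {card I | I. I \<subseteq> S \<and> indep V E I}"
    unfolding alpha_def by (intro Max_in[OF finite_indep_cards[OF assms]]) blast
  then show ?thesis
    using that by force
qed

lemma alpha_mono:
  assumes "finite T" "S \<subseteq> T"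
  shows "alpha V E S \<le> alpha V E T"
proof -
  obtain I where I: "I \<subseteq> S" "indep V E I" "card I = alpha V E S"
    using alpha_witness[OF finite_subset[OF assms(2,1)]] .
  have "card I \<le> alpha V E T"
    using I(1) assms(2) by (intro card_le_alpha[OF assms(1) _ I(2)]) (rule subset_trans)
  with I(3) show ?thesis by simp
qed

lemma indep_subset: "indep V E I \<Longrightarrow> J \<subseteq> I \<Longrightarrow> indep V E J"
  unfolding indep_def by blast

lemma alpha_le_sum_cover:
  assumes "finite S" "finite K" "S \<subseteq> (\<Union>k\<in>K. B k)"
  shows "alpha V E S \<le> (\<Sum>k\<in>K. alpha V E (B k \<inter> S))"
proof -
  obtain I where I: "I \<subseteq> S" "indep V E I" "card I = alpha V E S"
    using alpha_witness[OF assms(1)] .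
  have "card I \<le> card (\<Union>k\<in>K. B k \<inter> I)"
    using I(1) assms by (intro card_mono) (auto intro: finite_subset)
  also have "\<dots> \<le> (\<Sum>k\<in>K. card (B k \<inter> I))"
    by (rule card_UN_le[OF assms(2)])
  also have "\<dots> \<le> (\<Sum>k\<in>K. alpha V E (B k \<inter> S))"
  proof (rule sum_mono)
    fix k assume "k \<in> K"
    show "card (B k \<inter> I) \<le> alpha V E (B k \<inter> S)"
      using I(1) assms(1) indep_subset[OF I(2), of "B k \<inter> I"] by (intro card_le_alpha) auto
  qed
  finally show ?thesis using I(3) by simp
qed

lemma sum_alpha_components_le:
  assumes "symp E" "finite A" "A \<subseteq> V"
  shows "(\<Sum>P\<in>components E A. alpha V E P) \<le> alpha V E A"
proof -
  define C where "C = components E A"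
  have C_sub: "\<And>P. P \<in> C \<Longrightarrow> P \<subseteq> A"
    unfolding C_def by (rule components_subset)
  have fin: "finite C" "\<And>P. P \<in> C \<Longrightarrow> finite P"
    using finite_components[OF assms(2)] finite_mem_components[OF assms(2)] unfolding C_def
    by blast+
  have "\<forall>P\<in>C. \<exists>J. J \<subseteq> P \<and> indep V E J \<and> card J = alpha V E P"
    using alpha_witness[OF fin(2)] by metis
  then obtain I where I: "\<And>P. P \<in> C \<Longrightarrow> I P \<subseteq> P \<and> indep V E (I P) \<and> card (I P) = alpha V E P"
    by metis
  have union_sub: "(\<Union>P\<in>C. I P) \<subseteq> A"
    using I C_sub by blast
  have "indep V E (\<Union>P\<in>C. I P)"
    unfolding indep_def
  proof (intro conjI ballI)
    show "(\<Union>P\<in>C. I P) \<subseteq> V"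
      using union_sub assms(3) by (rule subset_trans)
  next
    fix u v assume "u \<in> (\<Union>P\<in>C. I P)" "v \<in> (\<Union>P\<in>C. I P)"
    then obtain P Q where PQ: "P \<in> C" "Q \<in> C" "u \<in> I P" "v \<in> I Q" by blast
    show "\<not> E u v"
    proof
      assume "E u v"
      moreover have "u \<in> P" "v \<in> Q"
        using PQ I by blast+
      ultimately have "P = Q"
        using components_eq_if_edge[OF assms(1)] PQ(1,2) unfolding C_def by blast
      then show False
        using \<open>E u v\<close> PQ I[OF PQ(1)] unfolding indep_def by blast
    qed
  qed
  then have "card (\<Union>P\<in>C. I P) \<le> alpha V E A"
    by (rule card_le_alpha[OF assms(2) union_sub])
  moreover have "card (\<Union>P\<in>C. I P) = (\<Sum>P\<in>C. card (I P))"
  proof (rule card_UN_disjoint[OF fin(1)])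
    show "\<forall>P\<in>C. finite (I P)"
      using I fin(2) finite_subset by blast
    show "\<forall>P\<in>C. \<forall>Q\<in>C. P \<noteq> Q \<longrightarrow> I P \<inter> I Q = {}"
      using I components_eqI[OF assms(1)] unfolding C_def by blast
  qed
  moreover have "(\<Sum>P\<in>C. card (I P)) = (\<Sum>P\<in>C. alpha V E P)"
    using I by (intro sum.cong) auto
  ultimately show ?thesis unfolding C_def by simp
qed

lemma Conf_nonneg: "finite P \<Longrightarrow> 0 \<le> Conf V E P Y"
  unfolding Conf_def using alpha_mono[OF _ Diff_subset] by simp

lemma sum_Conf_components_le:
  assumes "symp E" "finite A" "A \<subseteq> V"
  shows "(\<Sum>P\<in>components E A. Conf V E P Y) \<le> Conf V E A Y"
proof -
  define C where "C = components E A"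
  define N where "N = nbh V E Y"
  have "alpha V E (A - N) \<le> (\<Sum>P\<in>C. alpha V E (P \<inter> (A - N)))"
    using Union_components[of E A] finite_components[OF assms(2)] assms(2)
    unfolding C_def by (intro alpha_le_sum_cover) auto
  also have "\<dots> = (\<Sum>P\<in>C. alpha V E (P - N))"
  proof (intro sum.cong refl)
    fix P assume "P \<in> C"
    then have "P \<inter> (A - N) = P - N"
      using components_subset unfolding C_def by blast
    then show "alpha V E (P \<inter> (A - N)) = alpha V E (P - N)" by simp
  qed
  finally have "int (alpha V E (A - N)) \<le> (\<Sum>P\<in>C. int (alpha V E (P - N)))"
    by (simp flip: of_nat_sum)
  moreover have "(\<Sum>P\<in>C. int (alpha V E P)) \<le> int (alpha V E A)"
    using sum_alpha_components_le[OF assms] unfolding C_def by (simp flip: of_nat_sum)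
  ultimately show ?thesis
    unfolding Conf_def C_def N_def by (simp add: sum_subtractf)
qed

lemma card_components_Conf_nonzero_le:
  assumes "symp E" "finite A" "A \<subseteq> V"
  shows "int (card {P \<in> components E A. Conf V E P Y \<noteq> 0}) \<le> Conf V E A Y"
proof -
  define C where "C = components E A"
  have fin: "finite C" "\<And>P. P \<in> C \<Longrightarrow> finite P"
    using finite_components[OF assms(2)] finite_mem_components[OF assms(2)] unfolding C_def
    by blast+
  have "int (card {P \<in> C. Conf V E P Y \<noteq> 0}) = (\<Sum>P\<in>{P \<in> C. Conf V E P Y \<noteq> 0}. 1)"
    by simp
  also have "\<dots> \<le> (\<Sum>P\<in>{P \<in> C. Conf V E P Y \<noteq> 0}. Conf V E P Y)"
  proof (rule sum_mono)
    fix P assume P: "P \<in> {P \<in> C. Conf V E P Y \<noteq> 0}"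
    then have "0 \<le> Conf V E P Y"
      using Conf_nonneg fin(2) by blast
    with P show "1 \<le> Conf V E P Y" by simp
  qed
  also have "\<dots> \<le> (\<Sum>P\<in>C. Conf V E P Y)"
    by (rule sum_mono2[OF fin(1)]) (use Conf_nonneg fin(2) in blast)+
  also have "\<dots> \<le> Conf V E A Y"
    unfolding C_def by (rule sum_Conf_components_le[OF assms])
  finally show ?thesis unfolding C_def .
qed


definition triple_sets :: "'a set \<Rightarrow> 'a set set" where
  "triple_sets X = (\<lambda>(a, b, c). {a, b, c}) ` (X \<times> X \<times> X)"

lemma finite_triple_sets: "finite X \<Longrightarrow> finite (triple_sets X)"
  unfolding triple_sets_def by simp

lemma card_triple_sets_le:
  assumes "finite X"
  shows "card (triple_sets X) \<le> card X ^ 3"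
proof -
  have "card (triple_sets X) \<le> card (X \<times> X \<times> X)"
    unfolding triple_sets_def by (rule card_image_le) (simp add: assms)
  then show ?thesis
    by (simp add: card_cartesian_product power3_eq_cube)
qed

lemma triple_setsI:
  assumes "Y \<subseteq> X" "1 \<le> card Y" "card Y \<le> 3"
  shows "Y \<in> triple_sets X"
proof -
  consider "card Y = 1" | "card Y = 2" | "card Y = 3"
    using assms(2,3) by linarith
  then obtain a b c where "Y = {a, b, c}"
  proof cases
    case 1
    then obtain a where "Y = {a}" by (rule card_1_singletonE)
    then have "Y = {a, a, a}" by simp
    then show ?thesis using that by blast
  next
    case 2
    then obtain a b where "Y = {a, b}" by (auto simp: card_2_iff)
    then have "Y = {a, b, b}" by simp
    then show ?thesis using that by blast
  next
    case 3
    then show ?thesis using that by (auto simp: card_3_iff)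
  qed
  with assms(1) show ?thesis
    unfolding triple_sets_def by auto
qed

lemma nbh_anchor_triangle_in_triple_sets:
  assumes "anchor_triangle V E X P"
  shows "nbh V E P \<in> triple_sets X"
proof -
  obtain p1 p2 p3 x1 x2 x3 where P: "P \<in> components E (V - X)" "P = {p1, p2, p3}"
      and x: "x1 \<in> X" "x2 \<in> X" "x3 \<in> X"
      and n: "nbh V E {p1} = {p2, p3, x1}" "nbh V E {p2} = {p1, p3, x2}"
        "nbh V E {p3} = {p1, p2, x3}"
    using assms unfolding anchor_triangle_def by blast
  have "P \<inter> X = {}"
    using components_subset[OF P(1)] by blast
  moreover have "nbh V E P = (nbh V E {p1} \<union> nbh V E {p2} \<union> nbh V E {p3}) - P"
    unfolding nbh_def P(2) by blast
  ultimately have "nbh V E P = {x1, x2, x3}"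
    using n x P(2) by auto
  with x show ?thesis
    unfolding triple_sets_def by (intro image_eqI[of _ _ "(x1, x2, x3)"]) auto
qed

lemma card_nonredundant_anchor_triangles_le:
  assumes "finite X"
  shows "card {P. nonredundant_anchor_triangle V E X P} \<le> card X ^ 3"
proof -
  have "card {P. nonredundant_anchor_triangle V E X P} \<le> card (triple_sets X)"
  proof (rule card_inj_on_le)
    show "inj_on (nbh V E) {P. nonredundant_anchor_triangle V E X P}"
      by (rule inj_onI) (auto simp: nonredundant_anchor_triangle_def)
    show "nbh V E ` {P. nonredundant_anchor_triangle V E X P} \<subseteq> triple_sets X"
      using nbh_anchor_triangle_in_triple_sets unfolding nonredundant_anchor_triangle_def by blast
    show "finite (triple_sets X)"
      using assms by (rule finite_triple_sets)
  qed
  with card_triple_sets_le[OF assms] show ?thesis by simp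
qed

lemma chunks_subset_triple_sets: "{Y. chunk V E X Y} \<subseteq> triple_sets X"
  unfolding chunk_def by (auto intro: triple_setsI)

lemma card_chunks_le: "finite X \<Longrightarrow> card {Y. chunk V E X Y} \<le> card X ^ 3"
  using card_mono[OF finite_triple_sets chunks_subset_triple_sets] card_triple_sets_le
  by (rule order_trans)

lemma card_components_le:
  assumes "symp E" "finite V" "finite X"
    and covered: "\<forall>P \<in> components E (V - X). nonredundant_anchor_triangle V E X P \<or>
                    (\<exists>Y. chunk V E X Y \<and> Conf V E P Y \<noteq> 0)"
  shows "card (components E (V - X)) \<le>
           card {P. nonredundant_anchor_triangle V E X P} + card {Y. chunk V E X Y} * (card X - 1)"
proof -
  define C where "C = components E (V - X)"
  define NR where "NR = {P. nonredundant_anchor_triangle V E X P}"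
  define Ch where "Ch = {Y. chunk V E X Y}"
  define hit where "hit Y = {P \<in> C. Conf V E P Y \<noteq> 0}" for Y
  have "C \<subseteq> NR \<union> (\<Union>Y\<in>Ch. hit Y)"
    using covered unfolding C_def NR_def Ch_def hit_def by blast
  moreover have "NR \<subseteq> C"
    unfolding C_def NR_def nonredundant_anchor_triangle_def anchor_triangle_def by blast
  ultimately have C_eq: "C = NR \<union> (\<Union>Y\<in>Ch. hit Y)"
    unfolding hit_def by blast
  have "finite Ch"
    unfolding Ch_def by (rule finite_subset[OF chunks_subset_triple_sets finite_triple_sets[OF assms(3)]])
  have hit_le: "card (hit Y) \<le> card X - 1" if "Y \<in> Ch" for Y
  proof -
    have "int (card (hit Y)) \<le> Conf V E (V - X) Y"
      unfolding hit_def C_def using assms(1,2) by (intro card_components_Conf_nonzero_le) auto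
    moreover have "Conf V E (V - X) Y < int (card X)"
      using that unfolding Ch_def chunk_def by simp
    ultimately show ?thesis by linarith
  qed
  have "card C \<le> card NR + card (\<Union>Y\<in>Ch. hit Y)"
    unfolding C_eq by (rule card_Un_le)
  also have "\<dots> \<le> card NR + (\<Sum>Y\<in>Ch. card (hit Y))"
    using card_UN_le[OF \<open>finite Ch\<close>] by (rule add_left_mono)
  also have "\<dots> \<le> card NR + (\<Sum>Y\<in>Ch. card X - 1)"
    using hit_le by (intro add_left_mono sum_mono)
  finally show ?thesis
    unfolding C_def NR_def Ch_def by simp
qed


theorem lemma6:
  fixes V :: "'a set" and E :: "'a \<Rightarrow> 'a \<Rightarrow> bool" and X :: "'a set"
  assumes G: "simple_graph V E"
    and XV: "X \<subseteq> V"
    and pf: "pseudoforest E (V - X)"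
    and h1: "\<not> (\<exists>v\<in>X. Conf V E (V - X) {v} \<ge> int (card X))"
    and h2: "\<not> (\<exists>u\<in>X. \<exists>v\<in>X. u \<noteq> v \<and> \<not> E u v \<and> Conf V E (V - X) {u, v} \<ge> int (card X))"
    and h3: "\<forall>u\<in>X. \<forall>v\<in>X. \<forall>w\<in>X. u \<noteq> v \<and> u \<noteq> w \<and> v \<noteq> w \<and> indep V E {u, v, w}
               \<and> Conf V E (V - X) {u, v, w} \<ge> int (card X)
               \<longrightarrow> (\<exists>P. anchor_triangle V E X P \<and> nbh V E P = {u, v, w})"
    and h4: "\<not> (\<exists>P \<in> components E (V - X). \<not> nonredundant_anchor_triangle V E X P \<and>
               (\<forall>X'. chunk V E X X' \<longrightarrow> Conf V E P X' = 0))"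
  shows "card (components E (V - X)) \<le> card X ^ 4 + card X ^ 3"
proof -
  have "symp E" "finite V"
    using G unfolding simple_graph_def symp_def by blast+
  moreover have "finite X"
    using XV \<open>finite V\<close> by (rule finite_subset)
  ultimately have "card (components E (V - X)) \<le>
      card {P. nonredundant_anchor_triangle V E X P} + card {Y. chunk V E X Y} * (card X - 1)"
    using h4 by (intro card_components_le) auto
  also have "\<dots> \<le> card X ^ 3 + card X ^ 3 * (card X - 1)"
    using card_nonredundant_anchor_triangles_le card_chunks_le \<open>finite X\<close>
    by (intro add_mono mult_right_mono) simp_all
  also have "\<dots> \<le> card X ^ 3 + card X ^ 3 * card X"
    by simp
  also have "\<dots> = card X ^ 4 + card X ^ 3"
    by (simp add: power_numeral_reduce)
  finally show ?thesis .
qed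

end
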